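(* Let $k\ge1$, $n\ge 2k+1$ and $l\ge 2$. Then $\mathrm{ex}(J(n;k,k+1),C_{2l})\ge \binom{n}{k+1}=\frac{1}{k+1}e(J(n;k,k+1))$.
   Context: The doubled Johnson graph $J(n;k,k+1)$ is the bipartite graph with vertex set $\binom{[n]}{k}\cup\binom{[n]}{k+1}$ (subsets of $[n]$), where two vertices $u,v$ are adjacent iff $u\subset v$ or $v\subset u$. $\mathrm{ex}(G,H)$ is the maximum number of edges of a subgraph of $G$ containing no subgraph isomorphic to $H$; $C_m$ is the cycle of length $m$. *)

theory Defs
  imports Main
begin

text \<open>Simple graphs are represented by their edge set: a set of 2-element sets of vertices.\<close>

definition doubled_johnson :: "nat \<Rightarrow> nat \<Rightarrow> nat set set set" where
  "doubled_johnson n k = {{A, B} | A B. A \<subseteq> {0..<n} \<and> B \<subseteq> {0..<n} \<and>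
       card A = k \<and> card B = k + 1 \<and> A \<subseteq> B}"

definition contains_cycle :: "'a set set \<Rightarrow> nat \<Rightarrow> bool" where
  "contains_cycle F m \<longleftrightarrow> (\<exists>f :: nat \<Rightarrow> 'a. inj_on f {..<m} \<and>
       (\<forall>i<m. {f i, f ((i + 1) mod m)} \<in> F))"

definition ex_cycle :: "'a set set \<Rightarrow> nat \<Rightarrow> nat" where
  "ex_cycle E m = Max {card F | F. F \<subseteq> E \<and> \<not> contains_cycle F m}"

end

theory Submission
  imports Defs
begin

text \<open>Join every (k+1)-set B only to B minus its maximum. Each (k+1)-set is then a leaf, so
  the chosen edges form a star forest with exactly one edge per (k+1)-set, and a star forest
  contains no cycle of length at least 3. This gives the bound; the edge count of
  J(n;k,k+1) follows because each (k+1)-set has exactly k+1 subsets of size k.\<close>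

definition star_forest :: "'a set \<Rightarrow> ('a \<Rightarrow> 'a) \<Rightarrow> 'a set set" where
  "star_forest S g = (\<lambda>v. {g v, v}) ` S"

lemma star_forest_leaf:
  assumes "g ` S \<inter> S = {}" "v \<in> S" "{v, w} \<in> star_forest S g"
  shows "w = g v"
proof -
  obtain u where u: "u \<in> S" "{v, w} = {g u, u}"
    using assms(3) unfolding star_forest_def by auto
  have "v \<noteq> g u" using assms(1,2) u(1) by blast
  then show ?thesis using u(2) by (auto simp: doubleton_eq_iff)
qed

lemma card_star_forest:
  assumes "g ` S \<inter> S = {}"
  shows "card (star_forest S g) = card S"
  unfolding star_forest_def
proof (rule card_image, rule inj_onI)
  fix u v assume "u \<in> S" "v \<in> S" "{g u, u} = {g v, v}"
  then show "u = v" using star_forest_leaf[OF assms, of u "g v"] assms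
    by (auto simp: star_forest_def doubleton_eq_iff)
qed

lemma star_forest_no_cycle:
  assumes disj: "g ` S \<inter> S = {}" and "m \<ge> 3"
  shows "\<not> contains_cycle (star_forest S g) m"
proof
  assume "contains_cycle (star_forest S g) m"
  then obtain f :: "nat \<Rightarrow> 'a" where inj: "inj_on f {..<m}"
    and edge: "\<And>i. i < m \<Longrightarrow> {f i, f ((i + 1) mod m)} \<in> star_forest S g"
    unfolding contains_cycle_def by blast
  have e0: "{f 0, f 1} \<in> star_forest S g" using edge[of 0] assms(2) by simp
  have e1: "{f 1, f 2} \<in> star_forest S g" using edge[of 1] assms(2) by (simp add: numeral_2_eq_2)
  have elast: "{f 0, f (m - 1)} \<in> star_forest S g"
    using edge[of "m - 1"] assms(2) by (simp add: insert_commute)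
  obtain v where v: "v \<in> S" "{f 0, f 1} = {g v, v}"
    using e0 unfolding star_forest_def by auto
  show False
  proof (cases "f 0 = v")
    case True
    then have "f 1 = g (f 0)" "f (m - 1) = g (f 0)"
      using star_forest_leaf[OF disj] v e0 elast by (metis doubleton_eq_iff)+
    then show False using inj_onD[OF inj, of 1 "m - 1"] assms(2) by simp
  next
    case False
    then have "f 1 = v" "f 0 = g v" using v(2) by (auto simp: doubleton_eq_iff)
    then have "f 2 = f 0" using star_forest_leaf[OF disj v(1), of "f 2"] e1 by simp
    then show False using inj_onD[OF inj, of 2 0] assms(2) by simp
  qed
qed

lemma ex_cycle_ge:
  assumes "finite E" "F \<subseteq> E" "\<not> contains_cycle F m"
  shows "card F \<le> ex_cycle E m"
proof -
  have "finite {card F | F. F \<subseteq> E \<and> \<not> contains_cycle F m}" using assms(1) by simp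
  then show ?thesis unfolding ex_cycle_def using assms(2,3) by (auto intro: Max_ge)
qed

lemma card_remove_Max:
  assumes "finite B" "card B = k + 1"
  shows "card (B - {Max B}) = k"
proof -
  have "B \<noteq> {}" using assms(2) by auto
  then show ?thesis using assms by simp
qed

lemma doubleton_eq_by_card:
  assumes "{A, B} = {A', B'}" "card A = k" "card A' = k" "card B = k + 1" "card B' = k + 1"
  shows "A = A' \<and> B = B'"
  using assms by (auto simp: doubleton_eq_iff)

lemma finite_doubled_johnson: "finite (doubled_johnson n k)"
  by (rule finite_subset[of _ "Pow (Pow {0..<n})"]) (auto simp: doubled_johnson_def)

lemma card_doubled_johnson: "card (doubled_johnson n k) = (k + 1) * (n choose (k + 1))"
proof -
  let ?S = "{B. B \<subseteq> {0..<n} \<and> card B = k + 1}"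
  let ?P = "Sigma ?S (\<lambda>B. {A. A \<subseteq> B \<and> card A = k})"
  have fin_S: "finite ?S" by (rule finite_subset[of _ "Pow {0..<n}"]) auto
  have fin_B: "finite B" if "B \<in> ?S" for B
    using that finite_subset[of B "{0..<n}"] by simp
  have image: "doubled_johnson n k = (\<lambda>(B, A). {A, B}) ` ?P"
    unfolding doubled_johnson_def by (auto simp: image_iff)
  have inj: "inj_on (\<lambda>(B, A). {A, B}) ?P"
  proof (rule inj_onI)
    fix x y assume "x \<in> ?P" "y \<in> ?P" "(\<lambda>(B, A). {A, B}) x = (\<lambda>(B, A). {A, B}) y"
    moreover obtain B A B' A' where "x = (B, A)" "y = (B', A')" by fastforce
    ultimately show "x = y" using doubleton_eq_by_card[of A B A' B' k] by simp
  qed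
  have "card (doubled_johnson n k) = card ?P" unfolding image by (rule card_image[OF inj])
  also have "\<dots> = (\<Sum>B\<in>?S. card {A. A \<subseteq> B \<and> card A = k})"
  proof (rule card_SigmaI[OF fin_S], intro ballI)
    fix B assume "B \<in> ?S"
    show "finite {A. A \<subseteq> B \<and> card A = k}"
      by (rule finite_subset[of _ "Pow B"]) (use fin_B[OF \<open>B \<in> ?S\<close>] in auto)
  qed
  also have "\<dots> = (\<Sum>B\<in>?S. k + 1)"
    using fin_B by (intro sum.cong) (simp_all add: n_subsets)
  also have "\<dots> = (k + 1) * (n choose (k + 1))" by (simp add: n_subsets)
  finally show ?thesis .
qed

definition max_deletion_forest :: "nat \<Rightarrow> nat \<Rightarrow> nat set set set" where
  "max_deletion_forest n k =
     star_forest {B. B \<subseteq> {0..<n} \<and> card B = k + 1} (\<lambda>B. B - {Max B})"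

lemma card_remove_Max_subset:
  assumes "B \<subseteq> {0..<n::nat}" "card B = k + 1"
  shows "card (B - {Max B}) = k"
  using card_remove_Max[OF finite_subset[OF assms(1) finite_atLeastLessThan] assms(2)] .

lemma remove_Max_disjoint:
  "(\<lambda>B. B - {Max B}) ` {B. B \<subseteq> {0..<n::nat} \<and> card B = k + 1}
     \<inter> {B. B \<subseteq> {0..<n} \<and> card B = k + 1} = {}"
proof -
  have "card (B - {Max B}) \<noteq> k + 1" if "B \<subseteq> {0..<n}" "card B = k + 1" for B
    using card_remove_Max_subset[OF that] by simp
  then show ?thesis by auto
qed

lemma max_deletion_forest_subset: "max_deletion_forest n k \<subseteq> doubled_johnson n k"
proof
  fix e assume "e \<in> max_deletion_forest n k"
  then obtain B where B: "B \<subseteq> {0..<n}" "card B = k + 1" "e = {B - {Max B}, B}"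
    unfolding max_deletion_forest_def star_forest_def by auto
  have "card (B - {Max B}) = k" using card_remove_Max_subset[OF B(1,2)] .
  then show "e \<in> doubled_johnson n k"
    unfolding doubled_johnson_def using B by blast
qed

lemma card_max_deletion_forest: "card (max_deletion_forest n k) = n choose (k + 1)"
proof -
  have "card (max_deletion_forest n k) = card {B. B \<subseteq> {0..<n} \<and> card B = k + 1}"
    unfolding max_deletion_forest_def by (rule card_star_forest[OF remove_Max_disjoint])
  also have "\<dots> = n choose (k + 1)" using n_subsets[of "{0..<n}" "k + 1"] by simp
  finally show ?thesis .
qed

lemma max_deletion_forest_no_cycle:
  "m \<ge> 3 \<Longrightarrow> \<not> contains_cycle (max_deletion_forest n k) m"
  unfolding max_deletion_forest_def by (rule star_forest_no_cycle[OF remove_Max_disjoint])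

theorem mainTheorem6:
  fixes n k l :: nat
  assumes "k \<ge> 1" and "n \<ge> 2 * k + 1" and "l \<ge> 2"
  shows "ex_cycle (doubled_johnson n k) (2 * l) \<ge> n choose (k + 1)
         \<and> (k + 1) * (n choose (k + 1)) = card (doubled_johnson n k)"
proof -
  have "card (max_deletion_forest n k) \<le> ex_cycle (doubled_johnson n k) (2 * l)"
  proof (rule ex_cycle_ge)
    show "\<not> contains_cycle (max_deletion_forest n k) (2 * l)"
      using max_deletion_forest_no_cycle assms(3) by simp
  qed (simp_all add: finite_doubled_johnson max_deletion_forest_subset)
  then show ?thesis by (simp add: card_max_deletion_forest card_doubled_johnson)
qed

end
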